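(* Let $\mathcal{S}\subseteq\mathbb{R}^n$ be a $d$-dimensional simplex. For $k\ge0$ let $\mathcal{V}_k$ be the set of all vertices of all simplices in $\operatorname{subdiv}^k(\mathcal{S})$, and let $\mathcal{V}_\infty=\bigcup_{k\ge0}\mathcal{V}_k$. Then $\mathcal{V}_\infty$ is a dense subset of $\mathcal{S}$.
   Context: For a $d$-dimensional simplex $\mathcal{S}$ with vertices $v_1,\dots,v_{d+1}$, its barycenter is $b=\frac{1}{d+1}(v_1+\dots+v_{d+1})$, and $\operatorname{subdiv}(\mathcal{S})$ is the set of the $d+1$ simplices $\operatorname{conv}(v_1,\dots,v_{i-1},b,v_{i+1},\dots,v_{d+1})$, $i=1,\dots,d+1$. Recursively, $\operatorname{subdiv}^0(\mathcal{S})=\{\mathcal{S}\}$ and $\operatorname{subdiv}^k(\mathcal{S})=\bigcup_{\mathcal{T}\in\operatorname{subdiv}^{k-1}(\mathcal{S})}\operatorname{subdiv}(\mathcal{T})$. *)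

theory Defs
  imports "HOL-Analysis.Analysis"
begin

text \<open>A simplex is represented by the list of its vertices v_1,...,v_(d+1).\<close>

definition barycenter :: "('a::real_vector) list \<Rightarrow> 'a" where
  "barycenter vs = (1 / real (length vs)) *\<^sub>R sum_list vs"

definition subdiv :: "('a::real_vector) list \<Rightarrow> 'a list set" where
  "subdiv vs = {vs[i := barycenter vs] | i. i < length vs}"

fun subdiv_iter :: "nat \<Rightarrow> ('a::real_vector) list \<Rightarrow> 'a list set" where
  "subdiv_iter 0 vs = {vs}"
| "subdiv_iter (Suc k) vs = (\<Union>T\<in>subdiv_iter k vs. subdiv T)"

definition subdiv_vertices :: "nat \<Rightarrow> ('a::real_vector) list \<Rightarrow> 'a set" where
  "subdiv_vertices k vs = (\<Union>T\<in>subdiv_iter k vs. set T)"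

end

(* Follow a point x of the simplex down the subdivision tree, always replacing the vertex at
   which the barycentric coordinate of x is smallest: x stays in the new simplex, the chosen
   coordinate is multiplied by d + 1 and the minimum is subtracted from the others.
   If a coordinate ever drops below \<delta>, x is within \<delta> * diam of a facet of the current
   simplex, and by induction on the dimension the vertices of the subdivisions of that facet
   are limits of vertices of subdivisions of the whole simplex (subdividing repeatedly at the
   vertex opposite to the facet drives it to the barycentre of the facet).
   Otherwise every coordinate stays above \<delta>, so every vertex is replaced within any
   1/\<delta> consecutive steps, and each such window shrinks the spread of every coordinate of
   the vertices by the factor d / (d + 2); hence the simplices shrink to x. *)

theory Submission
  imports Defs
begin

lemma length_subdiv_iter: "U \<in> subdiv_iter k T \<Longrightarrow> length U = length T"
  by (induction k arbitrary: U) (auto simp: subdiv_def)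

lemma subdiv_iter_add:
  "U \<in> subdiv_iter k T \<Longrightarrow> V \<in> subdiv_iter n U \<Longrightarrow> V \<in> subdiv_iter (k + n) T"
  by (induction n arbitrary: V) auto

lemma update_barycenter_in_subdiv_iter:
  "U \<in> subdiv_iter k T \<Longrightarrow> i < length U \<Longrightarrow> U[i := barycenter U] \<in> subdiv_iter (Suc k) T"
  by (auto simp: subdiv_def)

lemma subdiv_vertices_subdiv_iter:
  "U \<in> subdiv_iter k T \<Longrightarrow> subdiv_vertices n U \<subseteq> subdiv_vertices (k + n) T"
  unfolding subdiv_vertices_def using subdiv_iter_add by blast

lemma barycenter_in_convex_hull:
  assumes "U \<noteq> []"
  shows "barycenter U \<in> convex hull (set U)"
proof -
  have "barycenter U = (\<Sum>i<length U. (1 / real (length U)) *\<^sub>R U ! i)"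
    by (simp add: barycenter_def sum_list_sum_nth atLeast0LessThan scaleR_sum_right)
  also have "\<dots> \<in> convex hull (set U)"
    by (rule convex_sum) (use assms in \<open>auto intro: hull_inc\<close>)
  finally show ?thesis .
qed

lemma convex_hull_subdiv_iter_subset:
  "U \<in> subdiv_iter k T \<Longrightarrow> convex hull (set U) \<subseteq> convex hull (set T)"
proof (induction k arbitrary: U)
  case (Suc k)
  then obtain V i where V: "V \<in> subdiv_iter k T" "i < length V" "U = V[i := barycenter V]"
    by (auto simp: subdiv_def)
  have "set U \<subseteq> insert (barycenter V) (set V)"
    using V(3) set_update_subset_insert by metis
  also have "\<dots> \<subseteq> convex hull (set V)"
    using V(2) barycenter_in_convex_hull[of V] hull_subset by fastforce
  finally have "convex hull (set U) \<subseteq> convex hull (set V)"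
    by (simp add: hull_minimal)
  with Suc.IH[OF V(1)] show ?case by blast
qed simp

lemma subdiv_vertices_subset_convex_hull: "subdiv_vertices k T \<subseteq> convex hull (set T)"
  unfolding subdiv_vertices_def
  using convex_hull_subdiv_iter_subset hull_subset by (metis UN_least subset_trans)

lemma barycenter_mset_eq: "mset A = mset B \<Longrightarrow> barycenter A = barycenter B"
  unfolding barycenter_def by (metis mset_eq_length sum_mset_sum_list)

lemma subdiv_iter_mset_eq:
  assumes "mset A = mset B" "U \<in> subdiv_iter k A"
  shows "\<exists>U'\<in>subdiv_iter k B. mset U = mset U'"
  using assms(2)
proof (induction k arbitrary: U)
  case 0
  with assms(1) show ?case by auto
next
  case (Suc k)
  then obtain V i where V: "V \<in> subdiv_iter k A" "i < length V" "U = V[i := barycenter V]"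
    by (auto simp: subdiv_def)
  obtain V' where V': "V' \<in> subdiv_iter k B" "mset V = mset V'"
    using Suc.IH[OF V(1)] by blast
  have "V ! i \<in> set V'"
    using V(2) mset_eq_setD[OF V'(2)] nth_mem by metis
  then obtain i' where i': "i' < length V'" "V' ! i' = V ! i"
    by (auto simp: in_set_conv_nth)
  have "mset U = mset (V'[i' := barycenter V'])"
    using V i' V'(2) barycenter_mset_eq[OF V'(2)] by (simp add: mset_update)
  with update_barycenter_in_subdiv_iter[OF V'(1) i'(1)] show ?case by blast
qed

lemma subdiv_vertices_mset_eq:
  assumes "mset A = mset B"
  shows "subdiv_vertices k A = subdiv_vertices k B"
proof -
  have "subdiv_vertices k A \<subseteq> subdiv_vertices k B" if "mset A = mset B" for A B :: "'a list"
    using subdiv_iter_mset_eq[OF that] mset_eq_setD unfolding subdiv_vertices_def by blast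
  with assms show ?thesis by (metis subset_antisym)
qed

definition barycentric_coords :: "'a::real_vector list \<Rightarrow> (nat \<Rightarrow> real) \<Rightarrow> 'a \<Rightarrow> bool" where
  "barycentric_coords U l x \<longleftrightarrow> (\<forall>i<length U. 0 \<le> l i) \<and> sum l {..<length U} = 1
     \<and> x = (\<Sum>i<length U. l i *\<^sub>R U ! i)"

lemma barycentric_coords_Cons:
  assumes "barycentric_coords T l x" "0 \<le> u" "0 \<le> v" "u + v = 1"
  shows "barycentric_coords (a # T) (\<lambda>i. if i = 0 then u else v * l (i - 1)) (u *\<^sub>R a + v *\<^sub>R x)"
  using assms unfolding barycentric_coords_def
  by (simp add: sum.lessThan_Suc_shift scaleR_sum_right flip: sum_distrib_left del: sum.lessThan_Suc)

lemma convex_hull_set_iff_barycentric_coords: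
  "x \<in> convex hull (set T) \<longleftrightarrow> (\<exists>l. barycentric_coords T l x)"
proof
  show "x \<in> convex hull (set T) \<Longrightarrow> \<exists>l. barycentric_coords T l x"
  proof (induction T arbitrary: x)
    case (Cons a T)
    show ?case
    proof (cases "T = []")
      case True
      with Cons.prems show ?thesis
        by (intro exI[of _ "\<lambda>i. 1"]) (auto simp: barycentric_coords_def)
    next
      case False
      then obtain u v y where "0 \<le> u" "0 \<le> v" "u + v = 1" "y \<in> convex hull (set T)"
        "x = u *\<^sub>R a + v *\<^sub>R y"
        using Cons.prems convex_hull_insert[of "set T" a] by auto
      with Cons.IH show ?thesis by (metis barycentric_coords_Cons)
    qed
  qed simp
  show "\<exists>l. barycentric_coords T l x \<Longrightarrow> x \<in> convex hull (set T)"
    unfolding barycentric_coords_def by (auto intro!: convex_sum[OF _ convex_convex_hull] simp: hull_inc)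
qed

abbreviation lists_near :: "real \<Rightarrow> 'a::metric_space list \<Rightarrow> 'a list \<Rightarrow> bool" where
  "lists_near e A B \<equiv> list_all2 (\<lambda>a b. dist a b \<le> e) A B"

lemma norm_sum_list_diff_le:
  fixes A B :: "'a::real_normed_vector list"
  assumes "lists_near e A B"
  shows "norm (sum_list A - sum_list B) \<le> real (length A) * e"
  using assms
proof (induction rule: list_all2_induct)
  case (Cons a A b B)
  have "norm (sum_list (a # A) - sum_list (b # B)) \<le> norm (a - b) + norm (sum_list A - sum_list B)"
    by (metis add_diff_add sum_list.Cons norm_triangle_ineq)
  with Cons show ?case by (simp add: dist_norm algebra_simps)
qed simp

lemma dist_barycenter_le:
  fixes A B :: "'a::real_normed_vector list"
  assumes "lists_near e A B" "A \<noteq> []"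
  shows "dist (barycenter A) (barycenter B) \<le> e"
proof -
  have "length B = length A"
    using assms(1) list_all2_lengthD by metis
  then have "dist (barycenter A) (barycenter B) = norm (sum_list A - sum_list B) / real (length A)"
    by (simp add: barycenter_def dist_norm flip: scaleR_diff_right)
  also have "\<dots> \<le> real (length A) * e / real (length A)"
    using norm_sum_list_diff_le[OF assms(1)] by (rule divide_right_mono) simp
  also have "\<dots> = e"
    using assms(2) by simp
  finally show ?thesis .
qed

lemma barycenter_snoc: "barycenter (V @ [y]) = (1 / (real (length V) + 1)) *\<^sub>R (sum_list V + y)"
  by (simp add: barycenter_def add.commute)

lemma barycenter_snoc_barycenter:
  assumes "V \<noteq> []"
  shows "barycenter (V @ [barycenter V]) = barycenter V"
proof -
  have "sum_list V = real (length V) *\<^sub>R barycenter V"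
    using assms by (simp add: barycenter_def)
  then have "sum_list V + barycenter V = (real (length V) + 1) *\<^sub>R barycenter V"
    by (simp add: algebra_simps)
  then show ?thesis
    by (simp add: barycenter_snoc)
qed

lemma dist_barycenter_snoc_le:
  fixes V V' :: "'a::real_normed_vector list"
  assumes "lists_near e V V'" "V' \<noteq> []"
  shows "dist (barycenter (V @ [y])) (barycenter V')
    \<le> (real (length V) * e + dist y (barycenter V')) / (real (length V) + 1)"
proof -
  let ?p = "real (length V) + 1" and ?c = "barycenter V'"
  have "length V' = length V"
    using assms(1) list_all2_lengthD by metis
  then have c: "(1 / ?p) *\<^sub>R (sum_list V' + ?c) = ?c"
    using barycenter_snoc[of V' ?c] barycenter_snoc_barycenter[OF assms(2)] by simp
  have "barycenter (V @ [y]) - ?c = (1 / ?p) *\<^sub>R (sum_list V + y) - (1 / ?p) *\<^sub>R (sum_list V' + ?c)"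
    by (simp only: barycenter_snoc c)
  also have "\<dots> = (1 / ?p) *\<^sub>R ((sum_list V - sum_list V') + (y - ?c))"
    by (simp add: algebra_simps)
  finally have "dist (barycenter (V @ [y])) ?c = norm ((sum_list V - sum_list V') + (y - ?c)) / ?p"
    by (simp add: dist_norm)
  also have "\<dots> \<le> (real (length V) * e + dist y ?c) / ?p"
    by (intro divide_right_mono order.trans[OF norm_triangle_ineq] add_mono norm_sum_list_diff_le assms(1))
      (auto simp: dist_norm)
  finally show ?thesis .
qed

lemma subdiv_iter_snoc_towards_barycenter:
  fixes V V' :: "'a::real_normed_vector list"
  assumes "V @ [y0] \<in> subdiv_iter N T" "lists_near e V V'" "V \<noteq> []"
  shows "\<exists>y. V @ [y] \<in> subdiv_iter (N + n) T
    \<and> dist y (barycenter V') \<le> e + dist y0 (barycenter V') / (real (length V) + 1) ^ n"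
proof (induction n)
  case 0
  have "dist (V ! 0) (V' ! 0) \<le> e"
    using list_all2_nthD[OF assms(2)] assms(3) by blast
  then have "0 \<le> e"
    using zero_le_dist order_trans by blast
  with assms(1) show ?case by auto
next
  case (Suc n)
  let ?p = "real (length V) + 1" and ?c = "barycenter V'" and ?r = "dist y0 (barycenter V')"
  obtain y where y: "V @ [y] \<in> subdiv_iter (N + n) T" "dist y ?c \<le> e + ?r / ?p ^ n"
    using Suc.IH by blast
  have "V @ [barycenter (V @ [y])] \<in> subdiv_iter (N + Suc n) T"
    using update_barycenter_in_subdiv_iter[OF y(1), of "length V"]
    by (simp add: list_update_append del: subdiv_iter.simps)
  have "V' \<noteq> []"
    using assms(2,3) list_all2_Nil by blast
  have "dist (barycenter (V @ [y])) ?c \<le> (real (length V) * e + dist y ?c) / ?p"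
    using assms(2) \<open>V' \<noteq> []\<close> by (rule dist_barycenter_snoc_le)
  also have "\<dots> \<le> (real (length V) * e + (e + ?r / ?p ^ n)) / ?p"
    using y(2) by (simp add: divide_right_mono)
  also have "\<dots> = (?p * e + ?r / ?p ^ n) / ?p"
    by (simp add: algebra_simps)
  also have "\<dots> = e + ?r / ?p ^ Suc n"
    by (simp add: add_divide_distrib divide_divide_eq_left power_Suc2)
  finally show ?case
    using \<open>V @ [barycenter (V @ [y])] \<in> subdiv_iter (N + Suc n) T\<close> by blast
qed

lemma exists_subdiv_iter_snoc_near_barycenter:
  fixes V V' :: "'a::real_normed_vector list"
  assumes "V @ [y0] \<in> subdiv_iter N T" "lists_near e V V'" "V \<noteq> []" "0 < \<epsilon>"
  shows "\<exists>N' y. V @ [y] \<in> subdiv_iter N' T \<and> dist y (barycenter V') \<le> e + \<epsilon>"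
proof -
  have "(\<lambda>n. dist y0 (barycenter V') / (real (length V) + 1) ^ n) \<longlonglongrightarrow> 0"
    using assms(3) by (intro LIMSEQ_divide_realpow_zero) auto
  then obtain n where "dist y0 (barycenter V') / (real (length V) + 1) ^ n < \<epsilon>"
    using assms(4) by (metis (no_types, lifting) eventually_sequentially order_tendstoD(2) order_refl)
  with subdiv_iter_snoc_towards_barycenter[OF assms(1-3), of n] show ?thesis
    by (meson add_left_mono order.trans less_imp_le)
qed

(* Each subdivision step of W is copied inside W @ [z]; in between, the extra vertex is pushed
   back towards the barycentre of the current face. *)
lemma subdiv_iter_snoc_approx:
  fixes W :: "'a::real_normed_vector list"
  assumes "U' \<in> subdiv_iter k W" "W \<noteq> []" "0 < e"
  shows "\<exists>N. \<exists>U \<in> subdiv_iter N (W @ [z]). lists_near e U (U' @ [barycenter U'])"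
  using assms(1,3)
proof (induction k arbitrary: U' e)
  case 0
  have start: "W @ [z] \<in> subdiv_iter 0 (W @ [z])" "lists_near (e / 2) W W"
    using 0 by (simp_all add: list_all2_refl)
  obtain N y where "W @ [y] \<in> subdiv_iter N (W @ [z])" "dist y (barycenter W) \<le> e / 2 + e / 2"
    using exists_subdiv_iter_snoc_near_barycenter[OF start assms(2)] 0 by (meson half_gt_zero)
  with 0 show ?case
    by (intro exI bexI[of _ "W @ [y]"]) (auto simp: list_all2_refl list_all2_appendI)
next
  case (Suc k)
  then obtain U0 i where U0: "U0 \<in> subdiv_iter k W" "i < length U0" "U' = U0[i := barycenter U0]"
    by (auto simp: subdiv_def)
  have "U0 \<noteq> []"
    using U0(2) by auto
  obtain N U where U: "U \<in> subdiv_iter N (W @ [z])" "lists_near (e / 2) U (U0 @ [barycenter U0])"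
    using Suc.IH[OF U0(1)] Suc.prems by (meson half_gt_zero)
  then have "length U = Suc (length U0)"
    using list_all2_lengthD by fastforce
  then obtain V y where U_eq: "U = V @ [y]"
    by (cases U rule: rev_cases) auto
  have "length V = length U0"
    using \<open>length U = Suc (length U0)\<close> U_eq by simp
  then have V: "lists_near (e / 2) V U0"
    using U(2) U_eq by (simp add: list_all2_append)
  have "dist (barycenter U) (barycenter U0) \<le> e / 2"
    using dist_barycenter_le[OF U(2)] U_eq barycenter_snoc_barycenter[OF \<open>U0 \<noteq> []\<close>] by simp
  with V U0(3) have V': "lists_near (e / 2) (V[i := barycenter U]) U'"
    by (simp add: list_all2_update_cong)
  have "U[i := barycenter U] \<in> subdiv_iter (Suc N) (W @ [z])"
    using update_barycenter_in_subdiv_iter[OF U(1)] U0(2) \<open>length U = Suc (length U0)\<close> by simp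
  then have "V[i := barycenter U] @ [y] \<in> subdiv_iter (Suc N) (W @ [z])"
    using U_eq U0(2) \<open>length V = length U0\<close> by (simp add: list_update_append)
  moreover have "V[i := barycenter U] \<noteq> []"
    using \<open>length V = length U0\<close> \<open>U0 \<noteq> []\<close> by auto
  ultimately obtain N' y' where "V[i := barycenter U] @ [y'] \<in> subdiv_iter N' (W @ [z])"
    "dist y' (barycenter U') \<le> e / 2 + e / 2"
    using exists_subdiv_iter_snoc_near_barycenter[OF _ V'] Suc.prems by (meson half_gt_zero)
  moreover have "lists_near e (V[i := barycenter U]) U'"
    using V' by (rule list_all2_mono) (use Suc.prems in linarith)
  ultimately show ?case
    by (intro exI bexI[of _ "V[i := barycenter U] @ [y']"]) (auto intro: list_all2_appendI)
qed

lemma subdiv_vertices_subset_closure_snoc: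
  fixes W :: "'a::real_normed_vector list"
  assumes "W \<noteq> []"
  shows "subdiv_vertices k W \<subseteq> closure (\<Union>N. subdiv_vertices N (W @ [z]))"
proof
  fix v assume "v \<in> subdiv_vertices k W"
  then obtain U' i where U': "U' \<in> subdiv_iter k W" "i < length U'" "v = U' ! i"
    by (auto simp: subdiv_vertices_def in_set_conv_nth)
  show "v \<in> closure (\<Union>N. subdiv_vertices N (W @ [z]))"
    unfolding closure_approachable
  proof (intro allI impI)
    fix e :: real assume "0 < e"
    then obtain N U where U: "U \<in> subdiv_iter N (W @ [z])" "lists_near (e / 2) U (U' @ [barycenter U'])"
      using subdiv_iter_snoc_approx[OF U'(1) assms] by (meson half_gt_zero)
    have "i < length U"
      using U(2) U'(2) list_all2_lengthD by fastforce
    then have "U ! i \<in> subdiv_vertices N (W @ [z])"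
      unfolding subdiv_vertices_def using U(1) nth_mem by blast
    moreover have "dist (U ! i) v \<le> e / 2"
      using list_all2_nthD[OF U(2) \<open>i < length U\<close>] U'(2,3) by (simp add: nth_append)
    ultimately show "\<exists>u\<in>\<Union>N. subdiv_vertices N (W @ [z]). dist u v < e"
      using \<open>0 < e\<close> by force
  qed
qed

definition facet :: "nat \<Rightarrow> 'a list \<Rightarrow> 'a list" where
  "facet j U = take j U @ drop (Suc j) U"

lemma mset_facet_snoc: "j < length U \<Longrightarrow> mset (facet j U @ [U ! j]) = mset U"
  unfolding facet_def by (metis id_take_nth_drop mset_append mset.simps add_mset_add_single
      union_mset_add_mset_right)

lemma length_facet: "j < length U \<Longrightarrow> length (facet j U) = length U - 1"
  by (simp add: facet_def)

lemma nth_in_set_facet: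
  assumes "i < length U" "i \<noteq> j"
  shows "U ! i \<in> set (facet j U)"
proof (cases "i < j")
  case True
  then have "take j U ! i = U ! i" "i < length (take j U)"
    using assms(1) by auto
  then show ?thesis
    unfolding facet_def by (metis Un_iff nth_mem set_append)
next
  case False
  then have "drop (Suc j) U ! (i - Suc j) = U ! i" "i - Suc j < length (drop (Suc j) U)"
    using assms by auto
  then show ?thesis
    unfolding facet_def by (metis Un_iff nth_mem set_append)
qed

lemma subdiv_vertices_facet_subset_closure:
  fixes U :: "'a::real_normed_vector list"
  assumes "U \<in> subdiv_iter k T" "j < length U" "2 \<le> length U"
  shows "subdiv_vertices n (facet j U) \<subseteq> closure (\<Union>N. subdiv_vertices N T)"
proof -
  have "facet j U \<noteq> []"
    using assms(2,3) length_facet[of j U] by auto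
  then have "subdiv_vertices n (facet j U) \<subseteq> closure (\<Union>N. subdiv_vertices N (facet j U @ [U ! j]))"
    by (rule subdiv_vertices_subset_closure_snoc)
  moreover have "(\<Union>N. subdiv_vertices N (facet j U @ [U ! j])) \<subseteq> (\<Union>N. subdiv_vertices N T)"
    using subdiv_vertices_mset_eq[OF mset_facet_snoc[OF assms(2)]] subdiv_vertices_subdiv_iter[OF assms(1)]
    by blast
  ultimately show ?thesis
    using closure_mono by blast
qed

lemma dist_to_facet_le:
  fixes U :: "'a::real_normed_vector list"
  assumes coords: "barycentric_coords U l x" and j: "j < length U" and "l j < 1"
  shows "\<exists>y\<in>convex hull (set (facet j U)). dist y x \<le> l j * diameter (convex hull (set U))"
proof -
  let ?A = "{..<length U} - {j}"
  define y where "y = (\<Sum>i\<in>?A. (l i / (1 - l j)) *\<^sub>R U ! i)"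
  have l_nonneg: "\<And>i. i < length U \<Longrightarrow> 0 \<le> l i"
    using coords by (simp add: barycentric_coords_def)
  have sum_A: "sum l ?A = 1 - l j"
    using coords j by (simp add: barycentric_coords_def sum_diff1)
  have "y \<in> convex hull (set (facet j U))"
    unfolding y_def using \<open>l j < 1\<close> l_nonneg
    by (intro convex_sum) (auto simp: sum_A simp flip: sum_divide_distrib intro!: hull_inc nth_in_set_facet)
  moreover have "x = l j *\<^sub>R U ! j + (1 - l j) *\<^sub>R y"
    using coords j \<open>l j < 1\<close>
    by (simp add: barycentric_coords_def y_def scaleR_sum_right sum.remove[of "{..<length U}" j])
  then have "y - x = l j *\<^sub>R (y - U ! j)"
    by (simp add: algebra_simps)
  then have "dist y x = l j * norm (U ! j - y)"
    using l_nonneg[OF j] by (simp add: dist_norm norm_minus_commute)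
  moreover have "set (facet j U) \<subseteq> set U"
    by (auto simp: facet_def dest: in_set_takeD in_set_dropD)
  then have "y \<in> convex hull (set U)"
    using \<open>y \<in> convex hull (set (facet j U))\<close> hull_mono by blast
  then have "norm (U ! j - y) \<le> diameter (convex hull (set U))"
    using diameter_bounded_bound[OF finite_imp_bounded_convex_hull[OF finite_set]] j
    by (metis dist_norm hull_inc nth_mem)
  ultimately show ?thesis
    using l_nonneg[OF j] by (metis mult_left_mono)
qed

lemma barycentric_coords_replace_min:
  assumes coords: "barycentric_coords U l x" and j: "j < length U"
    and min: "\<And>i. i < length U \<Longrightarrow> l j \<le> l i"
  shows "barycentric_coords (U[j := barycenter U])
    (\<lambda>i. if i = j then real (length U) * l j else l i - l j) x"
proof -
  let ?m = "length U" and ?U' = "U[j := barycenter U]"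
  have coeff: "(if i = j then real ?m * l j else l i - l j)
      = (l i - l j) + (if i = j then real ?m * l j else 0)" for i
    by simp
  have "(\<Sum>i<?m. (l i - l j) *\<^sub>R ?U' ! i) = (\<Sum>i<?m. (l i - l j) *\<^sub>R U ! i)"
  proof (rule sum.cong)
    show "(l i - l j) *\<^sub>R ?U' ! i = (l i - l j) *\<^sub>R U ! i" for i
      by (cases "i = j") simp_all
  qed simp
  also have "\<dots> = x - l j *\<^sub>R sum_list U"
    using coords by (simp add: barycentric_coords_def scaleR_diff_left sum_subtractf scaleR_sum_right
        sum_list_sum_nth atLeast0LessThan)
  finally have "(\<Sum>i<?m. ((l i - l j) + (if i = j then real ?m * l j else 0)) *\<^sub>R ?U' ! i)
      = x - l j *\<^sub>R sum_list U + (real ?m * l j) *\<^sub>R barycenter U"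
    using j by (simp add: scaleR_add_left sum.distrib if_distrib[of "\<lambda>c. c *\<^sub>R _"] cong: if_cong)
  also have "\<dots> = x"
    using j by (simp add: barycenter_def)
  finally have "x = (\<Sum>i<?m. (if i = j then real ?m * l j else l i - l j) *\<^sub>R ?U' ! i)"
    by (simp only: coeff)
  moreover have "sum (\<lambda>i. if i = j then real ?m * l j else l i - l j) {..<?m} = 1"
    using coords j by (simp only: coeff) (simp add: barycentric_coords_def sum.distrib sum_subtractf)
  ultimately show ?thesis
    using coords min j by (auto simp: barycentric_coords_def)
qed

lemma greedy_path:
  fixes T :: "'a::real_vector list"
  assumes "barycentric_coords T l0 x" "T \<noteq> []"
  obtains U L J where "\<And>t. U t \<in> subdiv_iter t T" "\<And>t. barycentric_coords (U t) (L t) x"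
    "\<And>t. J t < length T" "\<And>t. U (Suc t) = (U t)[J t := barycenter (U t)]"
    "\<And>t i. i < length T \<Longrightarrow> i \<noteq> J t \<Longrightarrow> L (Suc t) i = L t i - L t (J t)"
proof -
  let ?m = "length T"
  define step :: "'a list \<times> (nat \<Rightarrow> real) \<Rightarrow> 'a list \<times> (nat \<Rightarrow> real)" where
    "step = (\<lambda>(U, l). let j = arg_min_on l {..<?m} in
      (U[j := barycenter U], \<lambda>i. if i = j then real ?m * l j else l i - l j))"
  define U where "U t = fst ((step ^^ t) (T, l0))" for t
  define L where "L t = snd ((step ^^ t) (T, l0))" for t
  define J where "J t = arg_min_on (L t) {..<?m}" for t
  have J_less: "J t < ?m" and J_min: "i < ?m \<Longrightarrow> L t (J t) \<le> L t i" for t i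
    using arg_min_if_finite(1)[of "{..<?m}" "L t"] arg_min_least[of "{..<?m}" _ "L t"] assms(2)
    by (auto simp: J_def)
  have UL_Suc: "(U (Suc t), L (Suc t)) = step (U t, L t)" for t
    by (simp add: U_def L_def)
  have U_Suc: "U (Suc t) = (U t)[J t := barycenter (U t)]"
    and L_Suc: "L (Suc t) = (\<lambda>i. if i = J t then real ?m * L t (J t) else L t i - L t (J t))" for t
    using UL_Suc[of t] unfolding J_def by (simp_all add: step_def Let_def)
  have inv: "U t \<in> subdiv_iter t T \<and> barycentric_coords (U t) (L t) x" for t
  proof (induction t)
    case 0
    with assms(1) show ?case by (simp add: U_def L_def)
  next
    case (Suc t)
    then have "length (U t) = ?m"
      using length_subdiv_iter by blast
    have "U (Suc t) \<in> subdiv_iter (Suc t) T"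
      unfolding U_Suc using Suc \<open>length (U t) = ?m\<close> J_less[of t]
      by (simp add: update_barycenter_in_subdiv_iter del: subdiv_iter.simps)
    moreover have "barycentric_coords (U (Suc t)) (L (Suc t)) x"
      unfolding U_Suc L_Suc using barycentric_coords_replace_min[of "U t" "L t" x "J t"]
        Suc J_less J_min \<open>length (U t) = ?m\<close> by (simp cong: if_cong)
    ultimately show ?case
      by blast
  qed
  show thesis
    by (rule that[of U L J]) (use inv J_less U_Suc L_Suc in auto)
qed

lemma every_index_chosen_in_window:
  fixes L :: "nat \<Rightarrow> nat \<Rightarrow> real"
  assumes decrease: "\<And>t. i \<noteq> J t \<Longrightarrow> L (Suc t) i \<le> L t i - \<delta>"
    and bounds: "\<And>t. 0 < L t i \<and> L t i \<le> 1" and "1 \<le> real w * \<delta>"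
  shows "\<exists>t\<in>{K..<K + w}. J t = i"
proof (rule ccontr)
  assume none: "\<not> ?thesis"
  have "L (K + s) i \<le> L K i - real s * \<delta>" if "s \<le> w" for s
    using that
  proof (induction s)
    case (Suc s)
    then have "J (K + s) \<noteq> i"
      using none by auto
    with Suc decrease[of "K + s"] show ?case
      by (simp add: algebra_simps)
  qed simp
  from this[of w] bounds[of K] bounds[of "K + w"] assms(3) show False
    by linarith
qed

lemma barycenter_map_linear:
  assumes "linear f"
  shows "barycenter (map f U) = f (barycenter U)"
proof -
  have "sum_list (map f U) = f (sum_list U)"
    by (induction U) (simp_all add: linear_add[OF assms] linear_0[OF assms])
  then show ?thesis
    by (simp add: barycenter_def linear_scale[OF assms])
qed

lemma mult_barycenter_eq_sum:
  fixes v :: "real list"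
  shows "real (length v) * barycenter v = (\<Sum>p<length v. v ! p)"
  by (cases "v = []") (simp_all add: barycenter_def sum_list_sum_nth atLeast0LessThan)

lemma barycenter_le:
  fixes v :: "real list"
  assumes "v \<noteq> []" "\<And>p. p < length v \<Longrightarrow> v ! p \<le> A"
  shows "barycenter v \<le> A"
proof -
  have "real (length v) * barycenter v \<le> real (length v) * A"
    using sum_bounded_above[of "{..<length v}" "\<lambda>p. v ! p" A] assms(2)
    by (simp add: mult_barycenter_eq_sum)
  with assms(1) show ?thesis
    by simp
qed

lemma mult_barycenter_minus_nth_le:
  fixes v :: "real list"
  assumes "l < length v" "\<And>p. p < length v \<Longrightarrow> v ! p \<le> A"
  shows "real (length v) * barycenter v - v ! l \<le> (real (length v) - 1) * A"
proof -
  have "(\<Sum>p\<in>{..<length v} - {l}. v ! p) \<le> real (card ({..<length v} - {l})) * A"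
    using assms(2) by (intro sum_bounded_above) auto
  with assms(1) show ?thesis
    by (simp add: mult_barycenter_eq_sum sum_diff1 of_nat_diff)
qed

lemma mult_nth_minus_barycenter_le:
  fixes v :: "real list"
  assumes "i < length v"
    and "\<And>p. p < length v \<Longrightarrow> real (length v) * v ! i - v ! p \<le> (real (length v) - 1) * A"
  shows "real (length v) * v ! i - barycenter v \<le> (real (length v) - 1) * A"
proof -
  let ?n = "real (length v)"
  have "?n * (?n * v ! i - barycenter v) = (\<Sum>p<length v. ?n * v ! i - v ! p)"
    using assms(1) by (auto simp: right_diff_distrib mult_barycenter_eq_sum sum_subtractf)
  also have "\<dots> \<le> ?n * ((?n - 1) * A)"
    using sum_bounded_above[of "{..<length v}" "\<lambda>p. ?n * v ! i - v ! p"] assms(2) by simp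
  finally have "?n * (?n * v ! i - barycenter v) \<le> ?n * ((?n - 1) * A)" .
  moreover have "0 < ?n"
    using assms(1) by (cases "length v") auto
  ultimately show ?thesis
    by (simp add: mult_le_cancel_left_pos)
qed

(* Right after vertex J t is replaced, m u_(J t) - u_l is a sum of m - 1 entries; replacing
   another entry by the average later on preserves the bound. *)
lemma upper_bound_after_replacement:
  fixes u :: "nat \<Rightarrow> real list"
  assumes len: "\<And>t. length (u t) = m" and J: "\<And>t. J t < m"
    and step: "\<And>t. u (Suc t) = (u t)[J t := barycenter (u t)]"
    and bound: "\<And>p. p < m \<Longrightarrow> u K ! p \<le> A"
  shows "(\<forall>p<m. u (K + s) ! p \<le> A)
    \<and> (\<forall>t\<in>{K..<K + s}. \<forall>l<m. real m * u (K + s) ! J t - u (K + s) ! l \<le> (real m - 1) * A)"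
proof (induction s)
  case 0
  with bound show ?case by simp
next
  case (Suc s)
  let ?v = "u (K + s)" and ?j = "J (K + s)"
  have u_Suc: "u (Suc (K + s)) = ?v[?j := barycenter ?v]"
    by (simp add: step)
  have v_le: "\<And>p. p < length ?v \<Longrightarrow> ?v ! p \<le> A"
    using Suc.IH len by simp
  have "?v \<noteq> []"
    using len[of "K + s"] J[of 0] by auto
  then have b_le: "barycenter ?v \<le> A"
    using v_le by (rule barycenter_le)
  have "real m * u (K + Suc s) ! J t - u (K + Suc s) ! l \<le> (real m - 1) * A"
    if "t \<in> {K..<K + Suc s}" "l < m" for t l
  proof (cases "J t = ?j")
    case True
    have "(real m - 1) * barycenter ?v \<le> (real m - 1) * A"
      using b_le J[of t] by (intro mult_left_mono) auto
    moreover have "real m * barycenter ?v - ?v ! l \<le> (real m - 1) * A"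
      using mult_barycenter_minus_nth_le[OF _ v_le] \<open>l < m\<close> len by simp
    ultimately show ?thesis
      using True \<open>l < m\<close> len J[of t] by (cases "l = ?j") (simp_all add: u_Suc algebra_simps)
  next
    case False
    then have "t \<in> {K..<K + s}"
      using that(1) by (cases "t = K + s") auto
    then have i_bound: "\<And>p. p < m \<Longrightarrow> real m * ?v ! J t - ?v ! p \<le> (real m - 1) * A"
      using Suc.IH by blast
    then have "real m * ?v ! J t - barycenter ?v \<le> (real m - 1) * A"
      using mult_nth_minus_barycenter_le[of "J t" ?v A] J[of t] len by simp
    with i_bound[OF \<open>l < m\<close>] False \<open>l < m\<close> len J[of t] show ?thesis
      by (cases "l = ?j") (simp_all add: u_Suc)
  qed
  moreover have "\<forall>p<m. u (K + Suc s) ! p \<le> A"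
    using v_le b_le len J[of "K + s"] by (auto simp: u_Suc nth_list_update)
  ultimately show ?case
    by blast
qed

lemma spread_contracts_in_window:
  fixes u :: "nat \<Rightarrow> real list"
  assumes len: "\<And>t. length (u t) = m" and J: "\<And>t. J t < m"
    and step: "\<And>t. u (Suc t) = (u t)[J t := barycenter (u t)]"
    and cover: "\<And>i. i < m \<Longrightarrow> \<exists>t\<in>{K..<K + s}. J t = i"
    and spread: "\<And>i l. i < m \<Longrightarrow> l < m \<Longrightarrow> u K ! i - u K ! l \<le> D"
    and "i < m" "l < m"
  shows "u (K + s) ! i - u (K + s) ! l \<le> (real m - 1) / (real m + 1) * D"
proof -
  define p0 where "p0 = arg_min_on (\<lambda>p. u K ! p) {..<m}"
  have "0 < m"
    using \<open>i < m\<close> by simp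
  then have "p0 < m"
    unfolding p0_def using arg_min_if_finite(1)[of "{..<m}"] by auto
  have p0_min: "u K ! p0 \<le> u K ! p" if "p < m" for p
    unfolding p0_def using that by (intro arg_min_least) auto
  let ?a = "u K ! p0"
  have up: "u K ! p \<le> ?a + D" if "p < m" for p
    using spread[OF that \<open>p0 < m\<close>] by simp
  have neg_len: "length (map uminus (u t)) = m" for t
    by (simp add: len)
  have neg_step:
    "map uminus (u (Suc t)) = (map uminus (u t))[J t := barycenter (map uminus (u t))]" for t
    by (simp add: step map_update barycenter_map_linear[OF linear_uminus])
  have neg_low: "map uminus (u K) ! p \<le> - ?a" if "p < m" for p
    using p0_min[OF that] that len by simp
  (* the one-sided bounds for u and for -u add up to (m + 1) (u_i - u_l) \<le> (m - 1) D *)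
  obtain ti tl where "ti \<in> {K..<K + s}" "J ti = i" "tl \<in> {K..<K + s}" "J tl = l"
    using cover \<open>i < m\<close> \<open>l < m\<close> by metis
  then have "real m * u (K + s) ! i - u (K + s) ! l \<le> (real m - 1) * (?a + D)"
    and "real m * map uminus (u (K + s)) ! l - map uminus (u (K + s)) ! i \<le> (real m - 1) * - ?a"
    using upper_bound_after_replacement[OF len J step up, of s]
      upper_bound_after_replacement[OF neg_len J neg_step neg_low, of s] \<open>i < m\<close> \<open>l < m\<close>
    by blast+
  with \<open>i < m\<close> \<open>l < m\<close> len
  have "(real m + 1) * (u (K + s) ! i - u (K + s) ! l) \<le> (real m - 1) * D"
    by (simp add: algebra_simps)
  then show ?thesis
    by (simp add: field_simps add_pos_pos)
qed

lemma spread_contracts_geometrically: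
  fixes u :: "nat \<Rightarrow> real list"
  assumes len: "\<And>t. length (u t) = m" and J: "\<And>t. J t < m"
    and step: "\<And>t. u (Suc t) = (u t)[J t := barycenter (u t)]"
    and cover: "\<And>K i. i < m \<Longrightarrow> \<exists>t\<in>{K..<K + w}. J t = i"
    and spread: "\<And>i l. i < m \<Longrightarrow> l < m \<Longrightarrow> u 0 ! i - u 0 ! l \<le> D"
  shows "i < m \<Longrightarrow> l < m
    \<Longrightarrow> u (n * w) ! i - u (n * w) ! l \<le> ((real m - 1) / (real m + 1)) ^ n * D"
proof (induction n arbitrary: i l)
  case 0
  with spread show ?case by simp
next
  case (Suc n)
  have "u (n * w + w) ! i - u (n * w + w) ! l
      \<le> (real m - 1) / (real m + 1) * (((real m - 1) / (real m + 1)) ^ n * D)"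
    using spread_contracts_in_window[OF len J step cover Suc.IH] Suc.prems by blast
  then show ?case
    by (simp add: add.commute mult.assoc)
qed

lemma coordinate_spread_after_windows:
  fixes U :: "nat \<Rightarrow> 'a::euclidean_space list"
  assumes len: "\<And>t. length (U t) = m" and J: "\<And>t. J t < m"
    and step: "\<And>t. U (Suc t) = (U t)[J t := barycenter (U t)]"
    and cover: "\<And>K i. i < m \<Longrightarrow> \<exists>t\<in>{K..<K + w}. J t = i"
    and "i < m" "l < m" "b \<in> Basis"
  shows "\<bar>(U (n * w) ! i - U (n * w) ! l) \<bullet> b\<bar>
    \<le> ((real m - 1) / (real m + 1)) ^ n * diameter (set (U 0))"
proof -
  define u where "u t = map (\<lambda>v. v \<bullet> b) (U t)" for t
  have "linear (\<lambda>v. v \<bullet> b)"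
    by (rule bounded_linear.linear[OF bounded_linear_inner_left])
  then have u_step: "u (Suc t) = (u t)[J t := barycenter (u t)]" for t
    by (simp add: u_def step map_update barycenter_map_linear)
  have u_len: "length (u t) = m" for t
    by (simp add: u_def len)
  have u_spread: "u 0 ! i - u 0 ! l \<le> diameter (set (U 0))" if "i < m" "l < m" for i l
  proof -
    have "u 0 ! i - u 0 ! l \<le> norm (U 0 ! i - U 0 ! l)"
      using that len Basis_le_norm[OF \<open>b \<in> Basis\<close>, of "U 0 ! i - U 0 ! l"]
      by (simp add: u_def inner_diff_left)
    also have "\<dots> \<le> diameter (set (U 0))"
      unfolding dist_norm[symmetric] using that len
      by (intro diameter_bounded_bound) (auto simp: finite_imp_bounded)
    finally show ?thesis .
  qed
  have "u (n * w) ! i - u (n * w) ! l \<le> ((real m - 1) / (real m + 1)) ^ n * diameter (set (U 0))"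
    "u (n * w) ! l - u (n * w) ! i \<le> ((real m - 1) / (real m + 1)) ^ n * diameter (set (U 0))"
    using spread_contracts_geometrically[OF u_len J u_step cover u_spread \<open>i < m\<close> \<open>l < m\<close>]
      spread_contracts_geometrically[OF u_len J u_step cover u_spread \<open>l < m\<close> \<open>i < m\<close>]
    by simp_all
  with \<open>i < m\<close> \<open>l < m\<close> len show ?thesis
    by (simp add: u_def inner_diff_left)
qed

lemma vertices_close_after_regular_replacement:
  fixes U :: "nat \<Rightarrow> 'a::euclidean_space list"
  assumes len: "\<And>t. length (U t) = m" and J: "\<And>t. J t < m"
    and step: "\<And>t. U (Suc t) = (U t)[J t := barycenter (U t)]"
    and cover: "\<And>K i. i < m \<Longrightarrow> \<exists>t\<in>{K..<K + w}. J t = i" and "0 < e"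
  shows "\<exists>t. \<forall>p\<in>set (U t). \<forall>q\<in>set (U t). dist p q < e"
proof -
  define D where "D = diameter (set (U 0))"
  define r where "r = (real m - 1) / (real m + 1)"
  have "0 < m"
    using J[of 0] by simp
  then have "0 \<le> r" "r < 1"
    by (simp_all add: r_def)
  have "0 \<le> D"
    unfolding D_def by (simp add: diameter_ge_0 finite_imp_bounded)
  then have "0 < real DIM('a) * D + 1"
    by (intro add_nonneg_pos mult_nonneg_nonneg) simp_all
  then obtain n where n: "r ^ n < e / (real DIM('a) * D + 1)"
    using real_arch_pow_inv[OF divide_pos_pos[OF \<open>0 < e\<close>] \<open>r < 1\<close>] by blast
  show ?thesis
  proof (intro exI ballI)
    fix p q assume "p \<in> set (U (n * w))" "q \<in> set (U (n * w))"
    then obtain i l where "i < m" "l < m" and pq: "p = U (n * w) ! i" "q = U (n * w) ! l"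
      using len by (metis in_set_conv_nth)
    have "dist p q \<le> (\<Sum>b\<in>Basis. \<bar>(p - q) \<bullet> b\<bar>)"
      using norm_le_l1[of "p - q"] by (simp add: dist_norm)
    also have "\<dots> \<le> (\<Sum>b\<in>(Basis::'a set). r ^ n * D)"
      using coordinate_spread_after_windows[OF len J step cover \<open>i < m\<close> \<open>l < m\<close>] pq
      unfolding r_def D_def by (intro sum_mono) simp
    also have "\<dots> \<le> (real DIM('a) * D + 1) * r ^ n"
      using \<open>0 \<le> r\<close> by (simp add: algebra_simps)
    also have "\<dots> < e"
      using n \<open>0 < real DIM('a) * D + 1\<close> by (simp add: field_simps)
    finally show "dist p q < e" .
  qed
qed

lemma greedy_path_approaches_vertex:
  fixes U :: "nat \<Rightarrow> 'a::euclidean_space list"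
  assumes len: "\<And>t. length (U t) = m" and coords: "\<And>t. barycentric_coords (U t) (L t) x"
    and J: "\<And>t. J t < m" and U_Suc: "\<And>t. U (Suc t) = (U t)[J t := barycenter (U t)]"
    and L_Suc: "\<And>t i. i < m \<Longrightarrow> i \<noteq> J t \<Longrightarrow> L (Suc t) i = L t i - L t (J t)"
    and large: "\<And>t i. i < m \<Longrightarrow> \<delta> < L t i" and "0 < \<delta>" "0 < e"
  shows "\<exists>t. \<exists>v\<in>set (U t). dist v x < e"
proof -
  have L_le_1: "L t i \<le> 1" if "i < m" for t i
  proof -
    have "L t i \<le> sum (L t) {..<m}"
      using coords[of t] len that by (intro member_le_sum) (auto simp: barycentric_coords_def)
    with coords[of t] len show ?thesis
      by (simp add: barycentric_coords_def)
  qed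
  define w where "w = nat \<lceil>1 / \<delta>\<rceil>"
  have "1 / \<delta> \<le> real w"
    unfolding w_def by linarith
  then have "1 \<le> real w * \<delta>"
    using \<open>0 < \<delta>\<close> by (simp add: field_simps)
  have cover: "\<exists>t\<in>{K..<K + w}. J t = i" if "i < m" for K i
  proof (rule every_index_chosen_in_window)
    show "L (Suc t) i \<le> L t i - \<delta>" if "i \<noteq> J t" for t
      using L_Suc[OF \<open>i < m\<close> that] large[OF J[of t], of t] by simp
    show "0 < L t i \<and> L t i \<le> 1" for t
      using large[OF \<open>i < m\<close>, of t] L_le_1[OF \<open>i < m\<close>] \<open>0 < \<delta>\<close> by simp
  qed fact
  obtain t where small: "\<forall>p\<in>set (U t). \<forall>q\<in>set (U t). dist p q < e"
    using vertices_close_after_regular_replacement[OF len J U_Suc cover \<open>0 < e\<close>] by blast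
  have "x \<in> convex hull (set (U t))"
    using coords convex_hull_set_iff_barycentric_coords by blast
  moreover have "U t ! 0 \<in> set (U t)"
    using len J[of t] by simp
  ultimately obtain p q where "p \<in> set (U t)" "q \<in> set (U t)" "norm (U t ! 0 - x) \<le> norm (p - q)"
    using simplex_extremal_le_exists[of "set (U t)" "U t ! 0" x] by (auto intro: hull_inc)
  with small \<open>U t ! 0 \<in> set (U t)\<close> show ?thesis
    by (metis dist_norm le_less_trans)
qed

lemma small_factor_exists:
  fixes \<Delta> e :: real
  assumes "0 \<le> \<Delta>" "0 < e"
  obtains \<delta> where "0 < \<delta>" "\<delta> < 1" "\<delta> * \<Delta> < e"
proof (rule that)
  let ?\<delta> = "min (1 / 2) (e / (2 * (\<Delta> + 1)))"
  show "0 < ?\<delta>" "?\<delta> < 1"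
    using assms by simp_all
  have "?\<delta> * \<Delta> \<le> e / (2 * (\<Delta> + 1)) * (\<Delta> + 1)"
    using assms by (intro mult_mono) simp_all
  also have "\<dots> = e / 2"
    using assms(1) by (simp add: field_simps)
  also have "\<dots> < e"
    using assms(2) by simp
  finally show "?\<delta> * \<Delta> < e" .
qed

lemma near_facet_of_subdivision:
  fixes T :: "'a::real_normed_vector list"
  assumes "U \<in> subdiv_iter k T" "barycentric_coords U l x" "j < length U" "l j \<le> \<delta>" "\<delta> < 1"
  shows "\<exists>y\<in>convex hull (set (facet j U)). dist y x \<le> \<delta> * diameter (convex hull (set T))"
proof -
  have "l j < 1"
    using assms(4,5) by simp
  then obtain y where y: "y \<in> convex hull (set (facet j U))"
    "dist y x \<le> l j * diameter (convex hull (set U))"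
    using dist_to_facet_le[OF assms(2,3)] by blast
  have "l j * diameter (convex hull (set U)) \<le> \<delta> * diameter (convex hull (set T))"
  proof (rule mult_mono)
    show "diameter (convex hull (set U)) \<le> diameter (convex hull (set T))"
      using convex_hull_subdiv_iter_subset[OF assms(1)]
      by (intro diameter_subset) (auto simp: finite_imp_bounded_convex_hull)
    show "0 \<le> diameter (convex hull (set U))"
      by (simp add: diameter_ge_0 finite_imp_bounded_convex_hull)
    show "0 \<le> \<delta>"
      using assms(2-4) by (force simp: barycentric_coords_def)
  qed (rule assms(4))
  with y show ?thesis
    by (blast intro: order_trans)
qed

lemma convex_hull_subset_closure_of_facets:
  fixes T :: "'a::euclidean_space list"
  assumes "T \<noteq> []"
    and facets: "\<And>U k j. U \<in> subdiv_iter k T \<Longrightarrow> j < length T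
      \<Longrightarrow> convex hull (set (facet j U)) \<subseteq> closure (\<Union>k. subdiv_vertices k T)"
  shows "convex hull (set T) \<subseteq> closure (\<Union>k. subdiv_vertices k T)"
proof
  let ?V = "\<Union>k. subdiv_vertices k T" and ?\<Delta> = "diameter (convex hull (set T))"
  have "0 \<le> ?\<Delta>"
    by (simp add: diameter_ge_0 finite_imp_bounded_convex_hull)
  fix x assume "x \<in> convex hull (set T)"
  then obtain l0 where "barycentric_coords T l0 x"
    by (auto simp: convex_hull_set_iff_barycentric_coords)
  then obtain U L J where path: "\<And>t. U t \<in> subdiv_iter t T" "\<And>t. barycentric_coords (U t) (L t) x"
    "\<And>t. J t < length T" "\<And>t. U (Suc t) = (U t)[J t := barycenter (U t)]"
    "\<And>t i. i < length T \<Longrightarrow> i \<noteq> J t \<Longrightarrow> L (Suc t) i = L t i - L t (J t)"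
    using assms(1) by (rule greedy_path) blast
  have len: "length (U t) = length T" for t
    using path(1) length_subdiv_iter by blast
  have "x \<in> closure (closure ?V)"
    unfolding closure_approachable
  proof (intro allI impI)
    fix e :: real assume "0 < e"
    with \<open>0 \<le> ?\<Delta>\<close> obtain \<delta> where "0 < \<delta>" "\<delta> < 1" "\<delta> * ?\<Delta> < e"
      by (rule small_factor_exists)
    show "\<exists>y\<in>closure ?V. dist y x < e"
    proof (cases "\<exists>t j. j < length T \<and> L t j \<le> \<delta>")
      case True
      then obtain t j where "j < length T" "L t j \<le> \<delta>"
        by blast
      moreover from this have "j < length (U t)"
        using len by simp
      ultimately obtain y where "y \<in> convex hull (set (facet j (U t)))" "dist y x \<le> \<delta> * ?\<Delta>"
        using near_facet_of_subdivision[OF path(1,2)] \<open>\<delta> < 1\<close> by blast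
      with facets[OF path(1) \<open>j < length T\<close>] \<open>\<delta> * ?\<Delta> < e\<close> show ?thesis
        by (meson le_less_trans subsetD)
    next
      case False
      then have large: "\<And>t i. i < length T \<Longrightarrow> \<delta> < L t i"
        by (meson not_le)
      obtain t v where "v \<in> set (U t)" "dist v x < e"
        using greedy_path_approaches_vertex[where U = U and L = L and J = J,
            OF len path(2-5) large \<open>0 < \<delta>\<close> \<open>0 < e\<close>] by blast
      moreover have "v \<in> ?V"
        using \<open>v \<in> set (U t)\<close> path(1)[of t] unfolding subdiv_vertices_def by blast
      ultimately show ?thesis
        using closure_subset[of ?V] by blast
    qed
  qed
  then show "x \<in> closure ?V"
    by simp
qed

lemma convex_hull_subset_closure_subdiv_vertices:
  fixes T :: "'a::euclidean_space list"
  shows "convex hull (set T) \<subseteq> closure (\<Union>k. subdiv_vertices k T)"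
proof (induction T rule: measure_induct_rule[where f = length])
  case (less T)
  consider "length T \<le> 1" | "2 \<le> length T"
    by linarith
  then show ?case
  proof cases
    case 1
    then have "convex hull (set T) = set T"
      by (cases T) auto
    also have "\<dots> = subdiv_vertices 0 T"
      by (simp add: subdiv_vertices_def)
    also have "\<dots> \<subseteq> (\<Union>k. subdiv_vertices k T)"
      by blast
    also have "\<dots> \<subseteq> closure (\<Union>k. subdiv_vertices k T)"
      by (rule closure_subset)
    finally show ?thesis .
  next
    case 2
    show ?thesis
    proof (rule convex_hull_subset_closure_of_facets)
      fix U k j assume U: "U \<in> subdiv_iter k T" and "j < length T"
      then have "length U = length T"
        by (simp add: length_subdiv_iter)
      then have "length (facet j U) < length T"
        using \<open>j < length T\<close> 2 by (simp add: length_facet)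
      then have "convex hull (set (facet j U)) \<subseteq> closure (\<Union>n. subdiv_vertices n (facet j U))"
        by (rule less.IH)
      also have "\<dots> \<subseteq> closure (\<Union>k. subdiv_vertices k T)"
        using subdiv_vertices_facet_subset_closure[OF U] \<open>length U = length T\<close> \<open>j < length T\<close> 2
        by (simp add: closure_minimal UN_least)
      finally show "convex hull (set (facet j U)) \<subseteq> closure (\<Union>k. subdiv_vertices k T)" .
    qed (use 2 in auto)
  qed
qed

theorem lemma4:
  fixes vs :: "(real ^ 'n) list" and d :: nat
  assumes "length vs = d + 1"
    and "distinct vs"
    and "\<not> affine_dependent (set vs)"
  shows "(\<Union>k. subdiv_vertices k vs) \<subseteq> convex hull (set vs)
       \<and> convex hull (set vs) \<subseteq> closure (\<Union>k. subdiv_vertices k vs)"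
  using subdiv_vertices_subset_convex_hull convex_hull_subset_closure_subdiv_vertices by blast

end
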